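(* Let $\kappa \ge 1$ and let $\epsilon_T$ satisfy $0<\epsilon_T<3\kappa$. Set $$y_{\max} = \kappa\sqrt{2\ln\!\left(\tfrac{3\kappa}{\epsilon_T}\right)},\qquad z_{\max} = \sqrt{2\ln\!\left(\tfrac{3\kappa}{\epsilon_T}\right)}.$$ Then $$\sup_{x\in\mathcal{D}_\kappa}\left|\frac{i}{\sqrt{2\pi}}\int_0^{y_{\max}}dy\int_{-z_{\max}}^{z_{\max}}dz\; z e^{-z^2/2}e^{-ixyz} \;-\; \frac{1}{x}\right| \le \epsilon_T ,$$ where $\mathcal{D}_\kappa=[-1,-1/\kappa]\cup[1/\kappa,1]$.
   Context: For $x\neq 0$ one has the integral representation $x^{-1} = \frac{i}{\sqrt{2\pi}}\int_0^\infty dy\int_{-\infty}^{\infty}dz\, z e^{-z^2/2}e^{-ixyz}$; the displayed double integral with finite limits $y_{\max},z_{\max}>0$ is its truncation. *)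

theory Defs
  imports "HOL-Analysis.Analysis"
begin

definition D_kappa :: "real \<Rightarrow> real set" where
  "D_kappa \<kappa> = {-1..-1/\<kappa>} \<union> {1/\<kappa>..1}"

definition trunc_inv :: "real \<Rightarrow> real \<Rightarrow> real \<Rightarrow> complex" where
  "trunc_inv ymax zmax x =
     (\<i> / complex_of_real (sqrt (2 * pi))) *
     integral {0..ymax} (\<lambda>y. integral {-zmax..zmax}
        (\<lambda>z. complex_of_real (z * exp (- (z^2) / 2)) * exp (- \<i> * complex_of_real (x * y * z))))"

end

theory Submission
  imports Defs "HOL-Probability.Characteristic_Functions"
begin

(* Integrating out y first (Fubini for the continuous integrand) turns the truncated integral into
   (1/x) * int_{-Z}^{Z} phi(z) (1 - exp(-i x Y z)) dz, with phi the standard normal density. Over the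
   whole line this would be (1/x) (1 - exp(-(xY)^2/2)) by the characteristic function of the normal
   distribution, and since |1 - exp(i theta)| <= 2, cutting the line down to [-Z, Z] costs at most
   2 P(|N| > Z) <= 2 exp(-Z^2/2); this Gaussian tail bound follows from
   phi(x) <= exp(-Z^2/2) phi(x - Z) for x >= Z >= 0. For |x| >= 1/kappa and Y = kappa Z the total
   error is therefore at most 3 kappa exp(-Z^2/2), which is exactly epsilon_T for the chosen Z. *)

lemma std_normal_density_minus [simp]: "std_normal_density (- x) = std_normal_density x"
  by (simp add: normal_density_def)

lemma set_integrable_std_normal_density [simp, intro]:
  "A \<in> sets borel \<Longrightarrow> set_integrable lborel A std_normal_density"
  unfolding set_integrable_def by (intro integrable_mult_indicator) auto

lemma std_normal_density_le_shift:
  fixes Z x :: real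
  assumes "0 \<le> Z" "Z \<le> x"
  shows "std_normal_density x \<le> exp (- (Z^2) / 2) * std_normal_density (x - Z)"
proof -
  have "- (x^2) / 2 \<le> - (Z^2) / 2 + - ((x - Z)^2) / 2"
    using mult_nonneg_nonneg[of Z "x - Z"] assms by (simp add: power2_eq_square algebra_simps)
  then have "exp (- (x^2) / 2) \<le> exp (- (Z^2) / 2) * exp (- ((x - Z)^2) / 2)"
    by (simp flip: exp_add)
  then show ?thesis
    by (simp add: std_normal_density_def divide_right_mono)
qed

lemma std_normal_upper_tail_le_half_line:
  fixes Z :: real
  assumes "0 \<le> Z"
  shows "(LBINT x:{Z<..}. std_normal_density x)
           \<le> exp (- (Z^2) / 2) * (LBINT x:{0<..}. std_normal_density x)"
proof -
  have shift: "(LBINT x:{0<..}. std_normal_density x) = (LBINT x:{Z<..}. std_normal_density (x - Z))"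
    unfolding set_lebesgue_integral_def
    by (subst lborel_integral_real_affine[where c = 1 and t = Z])
       (auto intro!: Bochner_Integration.integral_cong split: split_indicator)
  have "set_integrable lborel {Z<..} (\<lambda>x. std_normal_density (x - Z))"
    unfolding set_integrable_def
    using integrable_mult_indicator[OF _ lborel_integrable_real_affine[of std_normal_density 1 "- Z"]]
    by simp
  then have "(LBINT x:{Z<..}. std_normal_density x)
               \<le> (LBINT x:{Z<..}. exp (- (Z^2) / 2) * std_normal_density (x - Z))"
    using assms by (intro set_integral_mono std_normal_density_le_shift) auto
  then show ?thesis
    by (simp add: shift)
qed

lemma std_normal_two_tails:
  fixes Z :: real
  assumes "0 \<le> Z"
  shows "(LBINT x:- {-Z..Z}. std_normal_density x) = 2 * (LBINT x:{Z<..}. std_normal_density x)"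
proof -
  have "(LBINT x:{..<-Z}. std_normal_density x) = (LBINT x:{Z<..}. std_normal_density x)"
    unfolding set_lebesgue_integral_def
    by (subst lborel_integral_real_affine[where c = "-1" and t = 0])
       (auto intro!: Bochner_Integration.integral_cong split: split_indicator)
  moreover have "{..<-Z} \<inter> {Z<..} = {}"
    using assms by auto
  moreover have "- {-Z..Z} = {..<-Z} \<union> {Z<..}"
    by auto
  ultimately show ?thesis
    by (simp add: set_integral_Un)
qed

lemma std_normal_half_line_le: "(LBINT x:{0<..}. std_normal_density x) \<le> 1 / 2"
proof -
  have "(LBINT x:- {0..0}. std_normal_density x) \<le> (\<integral>x. std_normal_density x \<partial>lborel)"
    unfolding set_lebesgue_integral_def
    by (intro integral_mono integrable_mult_indicator) (auto split: split_indicator)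
  then show ?thesis
    using std_normal_two_tails[of 0] by simp
qed

lemma std_normal_two_tails_le:
  fixes Z :: real
  assumes "0 \<le> Z"
  shows "(LBINT x:- {-Z..Z}. std_normal_density x) \<le> exp (- (Z^2) / 2)"
proof -
  have "(LBINT x:{Z<..}. std_normal_density x) \<le> exp (- (Z^2) / 2) * (1 / 2)"
    using std_normal_upper_tail_le_half_line[OF assms] mult_left_mono[OF std_normal_half_line_le]
    by (meson exp_ge_zero order_trans)
  then show ?thesis
    by (simp add: std_normal_two_tails[OF assms])
qed

lemma std_normal_fourier:
  "(\<integral>z. std_normal_density z *\<^sub>R exp (\<i> * complex_of_real (t * z)) \<partial>lborel)
     = complex_of_real (exp (- (t^2) / 2))"
proof -
  have "char std_normal_distribution t = complex_of_real (exp (- (t^2) / 2))"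
    by (simp add: char_std_normal_distribution)
  then show ?thesis
    unfolding char_def by (subst (asm) integral_density) (auto simp: mult.assoc)
qed

lemma integral_linear_phase:
  fixes x z Y :: real
  assumes "0 \<le> Y" "x \<noteq> 0"
  shows "integral {0..Y} (\<lambda>y. complex_of_real z * exp (- \<i> * complex_of_real (x * y * z)))
           = (1 - exp (- \<i> * complex_of_real (x * Y * z))) / (\<i> * complex_of_real x)"
proof -
  define G where "G w = - exp (- \<i> * complex_of_real x * w * complex_of_real z) / (\<i> * complex_of_real x)"
    for w :: complex
  have "((\<lambda>y. complex_of_real z * exp (- \<i> * complex_of_real (x * y * z)))
          has_integral G (complex_of_real Y) - G (complex_of_real 0)) {0..Y}"
  proof (rule fundamental_theorem_of_calculus[OF assms(1)])
    fix y :: real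
    have "(G has_field_derivative complex_of_real z * exp (- \<i> * complex_of_real (x * y * z)))
            (at (complex_of_real y))"
      unfolding G_def using assms(2) by (auto intro!: derivative_eq_intros simp: field_simps)
    then show "((\<lambda>y. G (complex_of_real y)) has_vector_derivative
                 complex_of_real z * exp (- \<i> * complex_of_real (x * y * z))) (at y within {0..Y})"
      by (rule has_vector_derivative_real_field)
  qed
  then have "integral {0..Y} (\<lambda>y. complex_of_real z * exp (- \<i> * complex_of_real (x * y * z)))
      = G (complex_of_real Y) - G (complex_of_real 0)"
    by (rule integral_unique)
  then show ?thesis
    unfolding G_def using assms(2) by (simp add: field_simps)
qed

lemma trunc_inv_eq_gaussian_integral:
  fixes x Y Z :: real
  assumes "0 \<le> Y" "x \<noteq> 0"
  shows "trunc_inv Y Z x = 1 / complex_of_real x * integral {-Z..Z}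
           (\<lambda>z. complex_of_real (std_normal_density z) * (1 - exp (- \<i> * complex_of_real (x * Y * z))))"
proof -
  define f where "f y z = complex_of_real (z * exp (- (z^2) / 2)) * exp (- \<i> * complex_of_real (x * y * z))"
    for y z
  define c where "c = complex_of_real (sqrt (2 * pi)) / (\<i> * complex_of_real x)"
  have swap: "integral {0..Y} (\<lambda>y. integral {-Z..Z} (f y)) = integral {-Z..Z} (\<lambda>z. integral {0..Y} (\<lambda>y. f y z))"
  proof -
    have "continuous_on (cbox (0, -Z) (Y, Z)) (\<lambda>(y, z). f y z)"
      unfolding f_def case_prod_beta by (intro continuous_intros) auto
    then show ?thesis
      using integral_swap_continuous[where f = f] by (simp add: cbox_interval)
  qed
  have inner: "integral {0..Y} (\<lambda>y. f y z)
      = c * (complex_of_real (std_normal_density z) * (1 - exp (- \<i> * complex_of_real (x * Y * z))))" for z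
  proof -
    have "integral {0..Y} (\<lambda>y. f y z)
        = complex_of_real (exp (- (z^2) / 2)) * integral {0..Y} (\<lambda>y. complex_of_real z * exp (- \<i> * complex_of_real (x * y * z)))"
      unfolding f_def by (simp add: mult.assoc mult.left_commute)
    moreover have "exp (- (z^2) / 2) = sqrt (2 * pi) * std_normal_density z"
      by (simp add: std_normal_density_def)
    ultimately show ?thesis
      unfolding c_def integral_linear_phase[OF assms] by (simp add: field_simps)
  qed
  have normalisation: "\<i> / complex_of_real (sqrt (2 * pi)) * c = 1 / complex_of_real x"
    unfolding c_def using assms(2) by (simp add: field_simps)
  have "trunc_inv Y Z x = \<i> / complex_of_real (sqrt (2 * pi)) * integral {-Z..Z} (\<lambda>z. c *
          (complex_of_real (std_normal_density z) * (1 - exp (- \<i> * complex_of_real (x * Y * z)))))"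
    unfolding trunc_inv_def f_def[symmetric] swap inner ..
  also have "\<dots> = \<i> / complex_of_real (sqrt (2 * pi)) * c * integral {-Z..Z}
      (\<lambda>z. complex_of_real (std_normal_density z) * (1 - exp (- \<i> * complex_of_real (x * Y * z))))"
    unfolding integral_mult_right by (rule mult.assoc[symmetric])
  finally show ?thesis
    unfolding normalisation .
qed

lemma norm_std_normal_phase_le:
  "norm (std_normal_density z *\<^sub>R (1 - exp (- \<i> * complex_of_real (t * z)))) \<le> 2 * std_normal_density z"
proof -
  have "norm (1 - exp (- \<i> * complex_of_real (t * z))) \<le> 2"
    using norm_triangle_ineq4[of 1 "exp (\<i> * complex_of_real (- t * z))"] by simp
  from mult_left_mono[OF this normal_density_nonneg] show ?thesis
    by (simp add: mult.commute)
qed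

lemma integrable_std_normal_phase:
  "integrable lborel (\<lambda>z. std_normal_density z *\<^sub>R (1 - exp (- \<i> * complex_of_real (t * z))))"
proof (rule Bochner_Integration.integrable_bound[of _ "\<lambda>z. 2 * std_normal_density z"])
  show "AE z in lborel. norm (std_normal_density z *\<^sub>R (1 - exp (- \<i> * complex_of_real (t * z))))
          \<le> norm (2 * std_normal_density z)"
    by (intro AE_I2 order_trans[OF norm_std_normal_phase_le]) simp
qed simp_all

lemma integral_std_normal_phase:
  "(\<integral>z. std_normal_density z *\<^sub>R (1 - exp (- \<i> * complex_of_real (t * z))) \<partial>lborel)
     = 1 - complex_of_real (exp (- (t^2) / 2))"
proof -
  have "integrable lborel (\<lambda>z. std_normal_density z *\<^sub>R exp (\<i> * complex_of_real (- t * z)))"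
    by (rule Bochner_Integration.integrable_bound[of _ std_normal_density])
       simp_all
  then show ?thesis
    using std_normal_fourier[of "- t"] by (simp add: scaleR_diff_right)
qed

lemma truncated_gaussian_phase_integral_error:
  fixes t Z :: real
  assumes "0 \<le> Z"
  shows "cmod (integral {-Z..Z} (\<lambda>z. complex_of_real (std_normal_density z) * (1 - exp (- \<i> * complex_of_real (t * z))))
                - (1 - complex_of_real (exp (- (t^2) / 2)))) \<le> 2 * exp (- (Z^2) / 2)"
proof -
  define K where "K z = std_normal_density z *\<^sub>R (1 - exp (- \<i> * complex_of_real (t * z)))" for z
  have K_set_integrable: "set_integrable lborel A K" if "A \<in> sets borel" for A
    using integrable_std_normal_phase that unfolding set_integrable_def K_def
    by (intro integrable_mult_indicator) auto
  have truncated: "integral {-Z..Z} K = (LBINT z:{-Z..Z}. K z)"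
    by (intro set_borel_integral_eq_integral(2)[symmetric] K_set_integrable) simp
  have split: "(\<integral>z. K z \<partial>lborel) = (LBINT z:{-Z..Z}. K z) + (LBINT z:-{-Z..Z}. K z)"
    using set_integral_Un[of "{-Z..Z}" "-{-Z..Z}" lborel K] K_set_integrable
    by (simp add: set_lebesgue_integral_def)
  have full: "(\<integral>z. K z \<partial>lborel) = 1 - complex_of_real (exp (- (t^2) / 2))"
    unfolding K_def by (rule integral_std_normal_phase)
  have "norm (LBINT z:-{-Z..Z}. K z) \<le> (LBINT z:-{-Z..Z}. norm (K z))"
    by (intro set_integral_norm_bound K_set_integrable) simp
  also have "\<dots> \<le> (LBINT z:-{-Z..Z}. 2 * std_normal_density z)"
    unfolding K_def
    by (intro set_integral_mono set_integrable_norm norm_std_normal_phase_le K_set_integrable[unfolded K_def]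
        set_integrable_mult_right set_integrable_std_normal_density) simp_all
  also have "\<dots> \<le> 2 * exp (- (Z^2) / 2)"
    using std_normal_two_tails_le[OF assms] by simp
  finally have "norm (LBINT z:-{-Z..Z}. K z) \<le> 2 * exp (- (Z^2) / 2)" .
  moreover have "(\<lambda>z. complex_of_real (std_normal_density z) * (1 - exp (- \<i> * complex_of_real (t * z)))) = K"
    by (simp add: fun_eq_iff K_def scaleR_conv_of_real)
  moreover have "integral {-Z..Z} K - (1 - complex_of_real (exp (- (t^2) / 2))) = - (LBINT z:-{-Z..Z}. K z)"
    unfolding full[symmetric] split truncated by simp
  ultimately show ?thesis
    by simp
qed

lemma trunc_inv_error_le:
  fixes x Y Z :: real
  assumes "0 \<le> Y" "x \<noteq> 0" "0 \<le> Z"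
  shows "cmod (trunc_inv Y Z x - 1 / complex_of_real x)
           \<le> (2 * exp (- (Z^2) / 2) + exp (- ((x * Y)^2) / 2)) / \<bar>x\<bar>"
proof -
  define I where "I = integral {-Z..Z}
    (\<lambda>z. complex_of_real (std_normal_density z) * (1 - exp (- \<i> * complex_of_real (x * Y * z))))"
  define g where "g = complex_of_real (exp (- ((x * Y)^2) / 2))"
  have "trunc_inv Y Z x - 1 / complex_of_real x = ((I - (1 - g)) - g) / complex_of_real x"
    unfolding trunc_inv_eq_gaussian_integral[OF assms(1,2)] I_def by (simp add: diff_divide_distrib)
  moreover have "cmod (I - (1 - g)) \<le> 2 * exp (- (Z^2) / 2)"
    unfolding I_def g_def by (rule truncated_gaussian_phase_integral_error[OF assms(3)])
  moreover have "cmod ((I - (1 - g)) - g) \<le> cmod (I - (1 - g)) + cmod g"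
    by (rule norm_triangle_ineq4)
  ultimately show ?thesis
    unfolding g_def by (simp add: norm_divide divide_right_mono)
qed

lemma trunc_inv_error_le_on_D_kappa:
  fixes \<kappa> Z x :: real
  assumes "1 \<le> \<kappa>" "0 \<le> Z" "x \<in> D_kappa \<kappa>"
  shows "cmod (trunc_inv (\<kappa> * Z) Z x - 1 / complex_of_real x) \<le> 3 * \<kappa> * exp (- (Z^2) / 2)"
proof -
  have "1 / \<kappa> \<le> \<bar>x\<bar>"
    using assms(3) unfolding D_kappa_def by auto
  then have x_ge: "1 \<le> \<bar>x\<bar> * \<kappa>"
    using assms(1) by (simp add: field_simps)
  have "Z^2 \<le> (x * (\<kappa> * Z))^2"
    using mult_right_mono[OF one_le_power[OF x_ge, of 2], of "Z^2"]
    by (simp add: power_mult_distrib mult.assoc)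
  then have long_tail: "exp (- ((x * (\<kappa> * Z))^2) / 2) \<le> exp (- (Z^2) / 2)"
    by simp
  have x_nonzero: "x \<noteq> 0" and "0 \<le> \<kappa> * Z"
    using x_ge assms(1,2) by auto
  then have "cmod (trunc_inv (\<kappa> * Z) Z x - 1 / complex_of_real x)
      \<le> (2 * exp (- (Z^2) / 2) + exp (- ((x * (\<kappa> * Z))^2) / 2)) / \<bar>x\<bar>"
    using assms(2) by (intro trunc_inv_error_le)
  also have "\<dots> \<le> 3 * exp (- (Z^2) / 2) / \<bar>x\<bar>"
    using long_tail by (intro divide_right_mono) auto
  also have "\<dots> \<le> 3 * \<kappa> * exp (- (Z^2) / 2)"
    using mult_left_mono[OF x_ge, of "3 * exp (- (Z^2) / 2)"] x_nonzero
    by (simp add: divide_le_eq mult_ac)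
  finally show ?thesis .
qed

theorem theorem3:
  fixes \<kappa> \<epsilon>T :: real
  assumes "\<kappa> \<ge> 1" and "0 < \<epsilon>T" and "\<epsilon>T < 3 * \<kappa>"
  shows "(SUP x\<in>D_kappa \<kappa>.
            cmod (trunc_inv (\<kappa> * sqrt (2 * ln (3 * \<kappa> / \<epsilon>T)))
                            (sqrt (2 * ln (3 * \<kappa> / \<epsilon>T))) x
                  - 1 / complex_of_real x)) \<le> \<epsilon>T"
proof (rule cSUP_least)
  show "D_kappa \<kappa> \<noteq> {}"
    using assms(1) unfolding D_kappa_def by auto
next
  fix x assume x: "x \<in> D_kappa \<kappa>"
  define Z where "Z = sqrt (2 * ln (3 * \<kappa> / \<epsilon>T))"
  have "1 < 3 * \<kappa> / \<epsilon>T"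
    using assms by simp
  then have "0 \<le> Z" and "3 * \<kappa> * exp (- (Z^2) / 2) = \<epsilon>T"
    using assms unfolding Z_def by (simp_all add: exp_minus)
  then show "cmod (trunc_inv (\<kappa> * Z) Z x - 1 / complex_of_real x) \<le> \<epsilon>T"
    using trunc_inv_error_le_on_D_kappa[OF assms(1) _ x] by metis
qed

end
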